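(* Let $\mathbf C=(\mathbf C_\tau,q_n^{\mathbf C},\mathsf e_i^{\mathbf C})$ be a minimal clone $\tau$-algebra, let $\mathrm{Var}(\mathbf C_\tau)$ be the variety of $\tau$-algebras generated by $\mathbf C_\tau$ and $\mathrm{Var}(\mathbf C)$ the variety of clone $\tau$-algebras generated by $\mathbf C$. Then: (i) $\mathbf C_\tau$ is the free algebra over a countable set of generators (namely $\{\mathsf e_1^{\mathbf C},\mathsf e_2^{\mathbf C},\dots\}$) in $\mathrm{Var}(\mathbf C_\tau)$; (ii) $\mathbf C$ is the clone $\mathrm{Var}(\mathbf C_\tau)$-algebra; (iii) $\mathbf C$ is the free algebra over an empty set of generators in $\mathrm{Var}(\mathbf C)$.
   Context: A clone $\tau$-algebra is an algebra $\mathbf C=(C,\sigma^{\mathbf C}\ (\sigma\in\tau),q_n^{\mathbf C}\ (n\ge0),\mathsf e_i^{\mathbf C}\ (i\ge1))$ with $\mathsf e_i$ nullary, $q_n$ of arity $n+1$, satisfying: (C1) $q_n(\mathsf e_i,x_1,\dots,x_n)=x_i$ ($1\le i\le n$); (C2) $q_n(\mathsf e_j,x_1,\dots,x_n)=\mathsf e_j$ ($j>n$); (C3) $q_n(x,\mathsf e_1,\dots,\mathsf e_n)=x$; (C4) $q_k(x,y_1,\dots,y_k)=q_n(x,y_1,\dots,y_k,\mathsf e_{k+1},\dots,\mathsf e_n)$ ($n>k$); (C5) $q_n(q_n(x,\mathbf y),\mathbf z)=q_n(x,q_n(y_1,\mathbf z),\dots,q_n(y_n,\mathbf z))$; (C6)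 $q_n(\sigma(x_1,\dots,x_k),\mathbf y)=\sigma(q_n(x_1,\mathbf y),\dots,q_n(x_k,\mathbf y))$ for $\sigma\in\tau$ of arity $k$. $\mathbf C_\tau=(C,\sigma^{\mathbf C})_{\sigma\in\tau}$ is the $\tau$-reduct. $\mathbf C$ is minimal if $C$ equals the smallest subset of $C$ containing all $\mathsf e_i^{\mathbf C}$ and closed under the operations $\sigma^{\mathbf C}$ ($\sigma\in\tau$). For a variety $\mathcal V$ of $\tau$-algebras with free algebra $\mathbf F_{\mathcal V}$ over $\{v_1,v_2,\dots\}$, the clone $\mathcal V$-algebra is $(\mathbf F_{\mathcal V},q_n^{\mathbf F},\mathsf e_i^{\mathbf F})$ with $\mathsf e_i^{\mathbf F}=v_i$ and $q_n^{\mathbf F}(a,b_1,\dots,b_n)=s(a)$, $s$ the unique endomorphism with $s(v_i)=b_i$ ($i\le n$) and $s(v_i)=v_i$ ($i>n$). In (ii), the identification is via the free generators $\mathsf e_i^{\mathbf C}$ playing the role of $v_i$. *)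

theory Defs
  imports Main
begin

text \<open>A signature is a type 'f of operation symbols with an arity function
  ar :: 'f => nat.  An algebra of that signature is a carrier set A together with
  an interpretation I :: 'f => 'a list => 'a (only argument lists of the right
  length inside the carrier matter).\<close>

datatype 'f trm = V nat | Op 'f "'f trm list"

fun wf_trm :: "('f \<Rightarrow> nat) \<Rightarrow> 'f trm \<Rightarrow> bool" where
  "wf_trm ar (V i) = True"
| "wf_trm ar (Op g ts) = (length ts = ar g \<and> (\<forall>t\<in>set ts. wf_trm ar t))"

fun eval :: "('f \<Rightarrow> 'a list \<Rightarrow> 'a) \<Rightarrow> (nat \<Rightarrow> 'a) \<Rightarrow> 'f trm \<Rightarrow> 'a" where
  "eval I env (V i) = env i"
| "eval I env (Op g ts) = I g (map (eval I env) ts)"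

definition algebra :: "('f \<Rightarrow> nat) \<Rightarrow> 'a set \<Rightarrow> ('f \<Rightarrow> 'a list \<Rightarrow> 'a) \<Rightarrow> bool" where
  "algebra ar A I \<longleftrightarrow> A \<noteq> {} \<and>
     (\<forall>g xs. length xs = ar g \<and> set xs \<subseteq> A \<longrightarrow> I g xs \<in> A)"

definition satisfies :: "'a set \<Rightarrow> ('f \<Rightarrow> 'a list \<Rightarrow> 'a) \<Rightarrow> 'f trm \<Rightarrow> 'f trm \<Rightarrow> bool" where
  "satisfies A I s t \<longleftrightarrow> (\<forall>env. (\<forall>i. env i \<in> A) \<longrightarrow> eval I env s = eval I env t)"

text \<open>Membership of (B, J) in the variety generated by (A, I): the variety generated
  by an algebra is the equational class of all algebras satisfying every identity
  (between well-formed terms) that holds in (A, I)  (= HSP(A) by Birkhoff).\<close>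
definition in_Var :: "('f \<Rightarrow> nat) \<Rightarrow> 'a set \<Rightarrow> ('f \<Rightarrow> 'a list \<Rightarrow> 'a)
     \<Rightarrow> 'b set \<Rightarrow> ('f \<Rightarrow> 'b list \<Rightarrow> 'b) \<Rightarrow> bool" where
  "in_Var ar A I B J \<longleftrightarrow> algebra ar B J \<and>
     (\<forall>s t. wf_trm ar s \<and> wf_trm ar t \<and> satisfies A I s t \<longrightarrow> satisfies B J s t)"

definition hom :: "('f \<Rightarrow> nat) \<Rightarrow> 'a set \<Rightarrow> ('f \<Rightarrow> 'a list \<Rightarrow> 'a)
     \<Rightarrow> 'b set \<Rightarrow> ('f \<Rightarrow> 'b list \<Rightarrow> 'b) \<Rightarrow> ('a \<Rightarrow> 'b) \<Rightarrow> bool" where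
  "hom ar A I B J h \<longleftrightarrow> (\<forall>x\<in>A. h x \<in> B) \<and>
     (\<forall>g xs. length xs = ar g \<and> set xs \<subseteq> A \<longrightarrow> h (I g xs) = J g (map h xs))"

text \<open>A clone tau-algebra is given by a carrier C, the tau-operations f, the
  operations q n (of arity n+1, written q n x [y1,...,yn]) and the nullary e i
  (for i >= 1; the value e 0 is unused junk).\<close>

definition clone_algebra :: "('f \<Rightarrow> nat) \<Rightarrow> 'a set \<Rightarrow> ('f \<Rightarrow> 'a list \<Rightarrow> 'a)
     \<Rightarrow> (nat \<Rightarrow> 'a \<Rightarrow> 'a list \<Rightarrow> 'a) \<Rightarrow> (nat \<Rightarrow> 'a) \<Rightarrow> bool" where
  "clone_algebra ar C f q e \<longleftrightarrow>
     algebra ar C f \<and>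
     (\<forall>i\<ge>1. e i \<in> C) \<and>
     (\<forall>n x ys. x \<in> C \<and> length ys = n \<and> set ys \<subseteq> C \<longrightarrow> q n x ys \<in> C) \<and>
     \<comment> \<open>(C1)\<close>
     (\<forall>n i xs. length xs = n \<and> set xs \<subseteq> C \<and> 1 \<le> i \<and> i \<le> n \<longrightarrow> q n (e i) xs = xs ! (i - 1)) \<and>
     \<comment> \<open>(C2)\<close>
     (\<forall>n j xs. length xs = n \<and> set xs \<subseteq> C \<and> n < j \<longrightarrow> q n (e j) xs = e j) \<and>
     \<comment> \<open>(C3)\<close>
     (\<forall>n x. x \<in> C \<longrightarrow> q n x (map e [1..<n+1]) = x) \<and>
     \<comment> \<open>(C4)\<close>
     (\<forall>n k x ys. k < n \<and> x \<in> C \<and> length ys = k \<and> set ys \<subseteq> C \<longrightarrow>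
        q k x ys = q n x (ys @ map e [k+1..<n+1])) \<and>
     \<comment> \<open>(C5)\<close>
     (\<forall>n x ys zs. x \<in> C \<and> length ys = n \<and> set ys \<subseteq> C \<and> length zs = n \<and> set zs \<subseteq> C \<longrightarrow>
        q n (q n x ys) zs = q n x (map (\<lambda>y. q n y zs) ys)) \<and>
     \<comment> \<open>(C6)\<close>
     (\<forall>n g xs ys. length xs = ar g \<and> set xs \<subseteq> C \<and> length ys = n \<and> set ys \<subseteq> C \<longrightarrow>
        q n (f g xs) ys = f g (map (\<lambda>x. q n x ys) xs))"

inductive_set gen_by_e :: "('f \<Rightarrow> nat) \<Rightarrow> ('f \<Rightarrow> 'a list \<Rightarrow> 'a) \<Rightarrow> (nat \<Rightarrow> 'a) \<Rightarrow> 'a set"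
  for ar f e where
  gen_e: "1 \<le> i \<Longrightarrow> e i \<in> gen_by_e ar f e"
| gen_op: "length xs = ar g \<Longrightarrow> \<forall>x\<in>set xs. x \<in> gen_by_e ar f e \<Longrightarrow> f g xs \<in> gen_by_e ar f e"

definition minimal_clone_algebra :: "('f \<Rightarrow> nat) \<Rightarrow> 'a set \<Rightarrow> ('f \<Rightarrow> 'a list \<Rightarrow> 'a)
     \<Rightarrow> (nat \<Rightarrow> 'a \<Rightarrow> 'a list \<Rightarrow> 'a) \<Rightarrow> (nat \<Rightarrow> 'a) \<Rightarrow> bool" where
  "minimal_clone_algebra ar C f q e \<longleftrightarrow> clone_algebra ar C f q e \<and> C = gen_by_e ar f e"

text \<open>The signature of clone tau-algebras: the tau-symbols, q_n (arity n+1) and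
  the constants; the constructor E k denotes the constant e_(k+1).\<close>
datatype 'f clone_op = Sig 'f | Q nat | E nat

fun clone_ar :: "('f \<Rightarrow> nat) \<Rightarrow> 'f clone_op \<Rightarrow> nat" where
  "clone_ar ar (Sig g) = ar g"
| "clone_ar ar (Q n) = Suc n"
| "clone_ar ar (E k) = 0"

fun clone_int :: "('f \<Rightarrow> 'a list \<Rightarrow> 'a) \<Rightarrow> (nat \<Rightarrow> 'a \<Rightarrow> 'a list \<Rightarrow> 'a) \<Rightarrow> (nat \<Rightarrow> 'a)
     \<Rightarrow> 'f clone_op \<Rightarrow> 'a list \<Rightarrow> 'a" where
  "clone_int f q e (Sig g) xs = f g xs"
| "clone_int f q e (Q n) xs = q n (hd xs) (tl xs)"
| "clone_int f q e (E k) xs = e (Suc k)"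

end

theory Submission
  imports Defs
begin

text \<open>Every element of a minimal clone algebra C is the value t(e_1, e_2, ...) of a term.
  By (C1), (C2) and (C6), q_n(t(e_1, e_2, ...), b_1, ..., b_n) = t(b_1, ..., b_n, e_(n+1), ...),
  so an equation between terms that holds at the generators holds for all assignments:
  the generators are generic.  Hence t(e_1, e_2, ...) \<mapsto> t(g_1, g_2, ...) is a well-defined
  homomorphism into any member of Var(C_tau), which gives (i); the substitution endomorphisms
  of (ii) are the maps x \<mapsto> q_n(x, b_1, ..., b_n).  For (iii) the same argument runs with
  ground terms of the clone signature, whose constants name the generators.\<close>

fun vars :: "'f trm \<Rightarrow> nat set" where
  "vars (V i) = {i}"
| "vars (Op g ts) = (\<Union>t\<in>set ts. vars t)"

lemma finite_vars: "finite (vars t)"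
  by (induction t) auto

lemma eval_cong: "(\<And>i. i \<in> vars t \<Longrightarrow> env i = env' i) \<Longrightarrow> eval I env t = eval I env' t"
proof (induction t)
  case (Op g ts)
  then have "map (eval I env) ts = map (eval I env') ts" by auto
  then show ?case unfolding eval.simps by (rule arg_cong)
qed simp

lemma eval_closed:
  "algebra ar A I \<Longrightarrow> wf_trm ar t \<Longrightarrow> (\<And>i. env i \<in> A) \<Longrightarrow> eval I env t \<in> A"
proof (induction t)
  case (Op g ts)
  then have "set (map (eval I env) ts) \<subseteq> A" by auto
  with Op.prems(1,2) show ?case by (simp add: algebra_def)
qed simp

lemma in_Var_refl: "algebra ar A I \<Longrightarrow> in_Var ar A I A I"
  by (simp add: in_Var_def)

lemma in_Var_extend_hom:
  assumes var: "in_Var ar A I B J" and \<gamma>: "\<And>i. \<gamma> i \<in> B"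
    and wf: "\<And>t. t \<in> Ts \<Longrightarrow> wf_trm ar t"
    and closed: "\<And>g ts. length ts = ar g \<Longrightarrow> set ts \<subseteq> Ts \<Longrightarrow> Op g ts \<in> Ts"
    and A: "A = eval I \<rho> ` Ts"
    and generic: "\<And>s t. s \<in> Ts \<Longrightarrow> t \<in> Ts \<Longrightarrow> eval I \<rho> s = eval I \<rho> t \<Longrightarrow> satisfies A I s t"
  shows "\<exists>h. hom ar A I B J h \<and> (\<forall>t\<in>Ts. h (eval I \<rho> t) = eval J \<gamma> t)"
proof -
  have algB: "algebra ar B J" using var by (simp add: in_Var_def)
  obtain T where T: "\<forall>x\<in>A. T x \<in> Ts \<and> eval I \<rho> (T x) = x"
    using bchoice[of A "\<lambda>x t. t \<in> Ts \<and> eval I \<rho> t = x"] A by blast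
  define h where "h = (\<lambda>x. eval J \<gamma> (T x))"
  have h_eval: "h (eval I \<rho> t) = eval J \<gamma> t" if t: "t \<in> Ts" for t
  proof -
    let ?x = "eval I \<rho> t"
    have x: "?x \<in> A" using A t by blast
    then have "satisfies A I (T ?x) t" using T t by (intro generic) auto
    then have "satisfies B J (T ?x) t" using var wf T x t by (auto simp: in_Var_def)
    then show ?thesis using \<gamma> by (simp add: satisfies_def h_def)
  qed
  have "hom ar A I B J h"
    unfolding hom_def
  proof (intro conjI ballI allI impI)
    fix x assume "x \<in> A"
    then show "h x \<in> B" using T wf eval_closed[OF algB _ \<gamma>] by (simp add: h_def)
  next
    fix g xs assume xs: "length xs = ar g \<and> set xs \<subseteq> A"
    then have Op: "Op g (map T xs) \<in> Ts" using T by (intro closed) auto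
    have "I g xs = eval I \<rho> (Op g (map T xs))" using T xs by (simp add: map_idI subset_iff)
    then have "h (I g xs) = eval J \<gamma> (Op g (map T xs))" using h_eval[OF Op] by simp
    then show "h (I g xs) = J g (map h xs)" by (simp add: h_def comp_def)
  qed
  then show ?thesis using h_eval by blast
qed

lemma hom_eq_on_gen_by_e:
  assumes h: "hom ar A f B J h" and h': "hom ar A f B J h'" and A: "gen_by_e ar f e \<subseteq> A"
    and gens: "\<And>i. 1 \<le> i \<Longrightarrow> h (e i) = h' (e i)"
    and x: "x \<in> gen_by_e ar f e"
  shows "h x = h' x"
  using x
proof (induction x rule: gen_by_e.induct)
  case (gen_e i)
  then show ?case by (rule gens)
next
  case (gen_op xs g)
  then have xs: "length xs = ar g \<and> set xs \<subseteq> A" using A by auto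
  have "h (f g xs) = J g (map h xs)" using h xs by (simp add: hom_def)
  also have "map h xs = map h' xs" using gen_op.IH by simp
  also have "J g (map h' xs) = h' (f g xs)" using h' xs by (simp add: hom_def)
  finally show ?case .
qed

lemma gen_by_e_eq_eval_image: "gen_by_e ar f e = eval f (\<lambda>i. e (Suc i)) ` {t. wf_trm ar t}"
proof (intro equalityI subsetI)
  fix x assume "x \<in> gen_by_e ar f e"
  then show "x \<in> eval f (\<lambda>i. e (Suc i)) ` {t. wf_trm ar t}"
  proof (induction x rule: gen_by_e.induct)
    case (gen_e i)
    then show ?case by (intro image_eqI[where x="V (i - 1)"]) simp_all
  next
    case (gen_op xs g)
    then have "\<forall>x\<in>set xs. \<exists>t. wf_trm ar t \<and> eval f (\<lambda>i. e (Suc i)) t = x"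
      by (fastforce simp: image_iff)
    then obtain T where T: "\<forall>x\<in>set xs. wf_trm ar (T x) \<and> eval f (\<lambda>i. e (Suc i)) (T x) = x"
      by (rule bchoice[THEN exE])
    then have "f g xs = eval f (\<lambda>i. e (Suc i)) (Op g (map T xs))" by (simp add: map_idI)
    moreover have "wf_trm ar (Op g (map T xs))" using T gen_op.hyps(1) by simp
    ultimately show ?case by (metis image_eqI mem_Collect_eq)
  qed
next
  fix x assume "x \<in> eval f (\<lambda>i. e (Suc i)) ` {t. wf_trm ar t}"
  then obtain t where "wf_trm ar t" "x = eval f (\<lambda>i. e (Suc i)) t" by blast
  then show "x \<in> gen_by_e ar f e"
  proof (induction t arbitrary: x)
    case (V i)
    then show ?case using gen_e[of "Suc i"] by simp
  next
    case (Op g ts)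
    then show ?case using gen_op[of "map (eval f (\<lambda>i. e (Suc i))) ts" ar g f e] by simp
  qed
qed

lemma
  assumes "clone_algebra ar C f q e"
  shows clone_algebra_algebra: "algebra ar C f"
    and clone_algebra_e_closed: "1 \<le> i \<Longrightarrow> e i \<in> C"
    and clone_algebra_q_closed: "x \<in> C \<Longrightarrow> length ys = n \<Longrightarrow> set ys \<subseteq> C \<Longrightarrow> q n x ys \<in> C"
    and clone_algebra_q_e_le: "length xs = n \<Longrightarrow> set xs \<subseteq> C \<Longrightarrow> 1 \<le> i \<Longrightarrow> i \<le> n \<Longrightarrow>
      q n (e i) xs = xs ! (i - 1)"
    and clone_algebra_q_e_gt: "length xs = n \<Longrightarrow> set xs \<subseteq> C \<Longrightarrow> n < j \<Longrightarrow> q n (e j) xs = e j"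
    and clone_algebra_q_op: "length xs = ar g \<Longrightarrow> set xs \<subseteq> C \<Longrightarrow> length ys = n \<Longrightarrow> set ys \<subseteq> C \<Longrightarrow>
      q n (f g xs) ys = f g (map (\<lambda>x. q n x ys) xs)"
  using assms unfolding clone_algebra_def by (elim conjE; metis)+

lemma q_eval_generators:
  assumes C: "clone_algebra ar C f q e" and bs: "length bs = n" "set bs \<subseteq> C"
  shows "wf_trm ar t \<Longrightarrow>
    q n (eval f (\<lambda>i. e (Suc i)) t) bs = eval f (\<lambda>i. if i < n then bs ! i else e (Suc i)) t"
proof (induction t)
  case (V i)
  then show ?case
    using clone_algebra_q_e_le[OF C bs] clone_algebra_q_e_gt[OF C bs] by simp
next
  case (Op g ts)
  have "set (map (eval f (\<lambda>i. e (Suc i))) ts) \<subseteq> C"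
    using Op.prems eval_closed[OF clone_algebra_algebra[OF C] _ clone_algebra_e_closed[OF C]] by auto
  then have "q n (eval f (\<lambda>i. e (Suc i)) (Op g ts)) bs
      = f g (map (\<lambda>t. q n (eval f (\<lambda>i. e (Suc i)) t) bs) ts)"
    using clone_algebra_q_op[OF C _ _ bs] Op.prems by (simp add: comp_def)
  also have "map (\<lambda>t. q n (eval f (\<lambda>i. e (Suc i)) t) bs) ts
      = map (eval f (\<lambda>i. if i < n then bs ! i else e (Suc i))) ts"
    using Op by simp
  finally show ?case by simp
qed

text \<open>Any assignment agrees, on the finitely many variables of s and t, with a substitution
  instance q_n(-, b_1, ..., b_n) of the generators.\<close>

lemma clone_algebra_satisfies_if_eval_eq:
  fixes C :: "'a set"
  assumes C: "clone_algebra ar C f q e" and wf: "wf_trm ar s" "wf_trm ar t"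
    and eq: "eval f (\<lambda>i. e (Suc i)) s = eval f (\<lambda>i. e (Suc i)) t"
  shows "satisfies C f s t"
  unfolding satisfies_def
proof (intro allI impI)
  fix env :: "nat \<Rightarrow> 'a" assume env: "\<forall>i. env i \<in> C"
  have "finite (vars s \<union> vars t)" by (simp add: finite_vars)
  then obtain n where n: "\<forall>i\<in>vars s \<union> vars t. i < n"
    unfolding finite_nat_set_iff_bounded by blast
  define bs where "bs = map env [0..<n]"
  have bs: "length bs = n" "set bs \<subseteq> C" using env by (auto simp: bs_def)
  define \<sigma> where "\<sigma> = (\<lambda>i. if i < n then bs ! i else e (Suc i))"
  have "eval f env s = eval f \<sigma> s"
    using n by (intro eval_cong) (auto simp: \<sigma>_def bs_def)
  also have "\<dots> = q n (eval f (\<lambda>i. e (Suc i)) s) bs"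
    using q_eval_generators[OF C bs wf(1)] by (simp add: \<sigma>_def)
  also have "\<dots> = q n (eval f (\<lambda>i. e (Suc i)) t) bs" by (simp only: eq)
  also have "\<dots> = eval f \<sigma> t"
    using q_eval_generators[OF C bs wf(2)] by (simp add: \<sigma>_def)
  also have "\<dots> = eval f env t"
    using n by (intro eval_cong) (auto simp: \<sigma>_def bs_def)
  finally show "eval f env s = eval f env t" .
qed

lemma hom_q:
  assumes C: "clone_algebra ar C f q e" and bs: "length bs = n" "set bs \<subseteq> C"
  shows "hom ar C f C f (\<lambda>x. q n x bs)"
  unfolding hom_def
proof (intro conjI ballI allI impI)
  fix x assume "x \<in> C"
  then show "q n x bs \<in> C" by (rule clone_algebra_q_closed[OF C _ bs])
next
  fix g xs assume "length xs = ar g \<and> set xs \<subseteq> C"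
  then show "q n (f g xs) bs = f g (map (\<lambda>x. q n x bs) xs)"
    using clone_algebra_q_op[OF C _ _ bs] by blast
qed

lemma minimal_clone_algebraD:
  assumes "minimal_clone_algebra ar C f q e"
  shows "clone_algebra ar C f q e" and "C = gen_by_e ar f e"
  using assms by (metis minimal_clone_algebra_def)+

lemma minimal_clone_algebra_hom_eq:
  assumes M: "minimal_clone_algebra ar C f q e"
    and h: "hom ar C f B J h" and h': "hom ar C f B J h'"
    and gens: "\<forall>i\<ge>1. h (e i) = h' (e i)" and x: "x \<in> C"
  shows "h x = h' x"
  by (rule hom_eq_on_gen_by_e[OF h h']) (use gens x minimal_clone_algebraD(2)[OF M] in auto)

lemma minimal_clone_algebra_extend_hom:
  assumes M: "minimal_clone_algebra ar C f q e" and var: "in_Var ar C f B J"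
    and g: "\<forall>i\<ge>1. g i \<in> B"
  shows "\<exists>h. hom ar C f B J h \<and> (\<forall>i\<ge>1. h (e i) = g i)"
proof -
  note C = minimal_clone_algebraD(1)[OF M] and C_gen = minimal_clone_algebraD(2)[OF M]
  have "\<exists>h. hom ar C f B J h \<and>
      (\<forall>t\<in>{t. wf_trm ar t}. h (eval f (\<lambda>i. e (Suc i)) t) = eval J (\<lambda>i. g (Suc i)) t)"
  proof (rule in_Var_extend_hom[OF var])
    show "g (Suc i) \<in> B" for i using g by simp
    show "C = eval f (\<lambda>i. e (Suc i)) ` {t. wf_trm ar t}"
      by (simp add: C_gen gen_by_e_eq_eval_image)
    show "satisfies C f s t"
      if "s \<in> {t. wf_trm ar t}" "t \<in> {t. wf_trm ar t}"
        "eval f (\<lambda>i. e (Suc i)) s = eval f (\<lambda>i. e (Suc i)) t" for s t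
      using clone_algebra_satisfies_if_eval_eq[OF C] that by simp
  qed (auto simp: subset_iff)
  then obtain h where h: "hom ar C f B J h"
    and h_eval: "\<And>t. wf_trm ar t \<Longrightarrow> h (eval f (\<lambda>i. e (Suc i)) t) = eval J (\<lambda>i. g (Suc i)) t"
    by auto
  have "h (e i) = g i" if "1 \<le> i" for i
    using h_eval[of "V (i - 1)"] that by simp
  then show ?thesis using h by blast
qed

lemma minimal_clone_algebra_q_eq_hom:
  assumes M: "minimal_clone_algebra ar C f q e" and bs: "length bs = n" "set bs \<subseteq> C"
    and s: "hom ar C f C f s"
    and s_le: "\<forall>i. 1 \<le> i \<and> i \<le> n \<longrightarrow> s (e i) = bs ! (i - 1)" and s_gt: "\<forall>i>n. s (e i) = e i"
    and a: "a \<in> C"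
  shows "q n a bs = s a"
proof -
  note C = minimal_clone_algebraD(1)[OF M]
  have "q n (e i) bs = s (e i)" if "1 \<le> i" for i
    using that s_le s_gt clone_algebra_q_e_le[OF C bs] clone_algebra_q_e_gt[OF C bs]
    by (cases "i \<le> n") auto
  then show ?thesis
    using minimal_clone_algebra_hom_eq[OF M hom_q[OF C bs] s _ a] by blast
qed

fun to_clone_trm :: "'f trm \<Rightarrow> 'f clone_op trm" where
  "to_clone_trm (V i) = Op (E i) []"
| "to_clone_trm (Op g ts) = Op (Sig g) (map to_clone_trm ts)"

lemma wf_to_clone_trm: "wf_trm ar t \<Longrightarrow> wf_trm (clone_ar ar) (to_clone_trm t)"
  by (induction t) auto

lemma vars_to_clone_trm: "vars (to_clone_trm t) = {}"
  by (induction t) auto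

lemma eval_to_clone_trm:
  "eval (clone_int f q e) env (to_clone_trm t) = eval f (\<lambda>i. e (Suc i)) t"
  by (induction t) (simp_all add: comp_def cong: map_cong)

lemma algebra_clone_int:
  assumes C: "clone_algebra ar C f q e"
  shows "algebra (clone_ar ar) C (clone_int f q e)"
  unfolding algebra_def
proof (intro conjI allI impI)
  show "C \<noteq> {}" using clone_algebra_e_closed[OF C, of 1] by auto
next
  fix p xs assume xs: "length xs = clone_ar ar p \<and> set xs \<subseteq> C"
  show "clone_int f q e p xs \<in> C"
  proof (cases p)
    case (Sig g)
    then show ?thesis using clone_algebra_algebra[OF C] xs by (simp add: algebra_def)
  next
    case (Q n)
    then obtain x ys where "xs = x # ys" using xs by (cases xs) auto
    then show ?thesis using Q xs clone_algebra_q_closed[OF C] by simp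
  next
    case (E k)
    then show ?thesis using clone_algebra_e_closed[OF C] by simp
  qed
qed

lemma hom_clone_int_reduct:
  "hom (clone_ar ar) A (clone_int f q e) B J h \<Longrightarrow> hom ar A f B (\<lambda>g. J (Sig g)) h"
  unfolding hom_def by (metis clone_ar.simps(1) clone_int.simps(1))

lemma hom_clone_int_e:
  "hom (clone_ar ar) A (clone_int f q e) B J h \<Longrightarrow> h (e (Suc k)) = J (E k) []"
  unfolding hom_def by (metis clone_ar.simps(3) clone_int.simps(3) empty_subsetI list.map(1)
      list.set(1) list.size(3))

lemma minimal_clone_algebra_clone_hom_eq:
  assumes M: "minimal_clone_algebra ar C f q e"
    and h: "hom (clone_ar ar) C (clone_int f q e) B J h"
    and h': "hom (clone_ar ar) C (clone_int f q e) B J h'"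
    and x: "x \<in> C"
  shows "h x = h' x"
proof (rule hom_eq_on_gen_by_e[OF hom_clone_int_reduct[OF h] hom_clone_int_reduct[OF h']])
  show "h (e i) = h' (e i)" if "1 \<le> i" for i
    using hom_clone_int_e[OF h, of "i - 1"] hom_clone_int_e[OF h', of "i - 1"] that by simp
qed (use minimal_clone_algebraD(2)[OF M] x in simp_all)

lemma minimal_clone_algebra_clone_hom_exists:
  assumes M: "minimal_clone_algebra ar C f q e"
    and var: "in_Var (clone_ar ar) C (clone_int f q e) B J"
  shows "\<exists>h. hom (clone_ar ar) C (clone_int f q e) B J h"
proof -
  note C = minimal_clone_algebraD(1)[OF M] and C_gen = minimal_clone_algebraD(2)[OF M]
  obtain b where b: "b \<in> B" using var by (auto simp: in_Var_def algebra_def)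
  define Ts where "Ts = {t. wf_trm (clone_ar ar) t \<and> vars t = {}}"
  define \<rho> where "\<rho> = (\<lambda>_::nat. e 1)"
  have \<rho>: "\<rho> i \<in> C" for i using clone_algebra_e_closed[OF C] by (simp add: \<rho>_def)
  have ground_eval: "eval (clone_int f q e) env t = eval (clone_int f q e) \<rho> t"
    if "t \<in> Ts" for env t
    using that by (intro eval_cong) (simp add: Ts_def)
  have "\<exists>h. hom (clone_ar ar) C (clone_int f q e) B J h \<and>
      (\<forall>t\<in>Ts. h (eval (clone_int f q e) \<rho> t) = eval J (\<lambda>_. b) t)"
  proof (rule in_Var_extend_hom[OF var])
    show "C = eval (clone_int f q e) \<rho> ` Ts"
    proof (intro equalityI subsetI)
      fix x assume "x \<in> C"
      then obtain t where "wf_trm ar t" "x = eval f (\<lambda>i. e (Suc i)) t"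
        unfolding C_gen gen_by_e_eq_eval_image by blast
      then have "to_clone_trm t \<in> Ts" "x = eval (clone_int f q e) \<rho> (to_clone_trm t)"
        by (simp_all add: Ts_def wf_to_clone_trm vars_to_clone_trm eval_to_clone_trm)
      then show "x \<in> eval (clone_int f q e) \<rho> ` Ts" by (rule rev_image_eqI)
    next
      fix x assume "x \<in> eval (clone_int f q e) \<rho> ` Ts"
      then obtain t where "t \<in> Ts" "x = eval (clone_int f q e) \<rho> t" by blast
      then show "x \<in> C" using eval_closed[OF algebra_clone_int[OF C] _ \<rho>] by (simp add: Ts_def)
    qed
    show "satisfies C (clone_int f q e) s t"
      if "s \<in> Ts" "t \<in> Ts" "eval (clone_int f q e) \<rho> s = eval (clone_int f q e) \<rho> t" for s t
      unfolding satisfies_def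
      using ground_eval[OF that(1)] ground_eval[OF that(2)] that(3) by metis
  qed (use b in \<open>auto simp: Ts_def\<close>)
  then show ?thesis by blast
qed

theorem theorem11p8:
  fixes ar :: "'f \<Rightarrow> nat"
    and C :: "'a set" and f :: "'f \<Rightarrow> 'a list \<Rightarrow> 'a"
    and q :: "nat \<Rightarrow> 'a \<Rightarrow> 'a list \<Rightarrow> 'a" and e :: "nat \<Rightarrow> 'a"
  assumes "minimal_clone_algebra ar C f q e"
  shows
    \<comment> \<open>(i) C_tau is free over e_1, e_2, ... in Var(C_tau)\<close>
    "(in_Var ar C f C f \<and>
      (\<forall>(B :: 'b set) J (g :: nat \<Rightarrow> 'b). in_Var ar C f B J \<and> (\<forall>i\<ge>1. g i \<in> B) \<longrightarrow>
         (\<exists>h. hom ar C f B J h \<and> (\<forall>i\<ge>1. h (e i) = g i)) \<and>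
         (\<forall>h h'. hom ar C f B J h \<and> (\<forall>i\<ge>1. h (e i) = g i) \<and>
                 hom ar C f B J h' \<and> (\<forall>i\<ge>1. h' (e i) = g i) \<longrightarrow> (\<forall>x\<in>C. h x = h' x))))
     \<and>
     \<comment> \<open>(ii) C is the clone Var(C_tau)-algebra (with e_i playing the role of v_i)\<close>
     (\<forall>n a bs. a \<in> C \<and> length bs = n \<and> set bs \<subseteq> C \<longrightarrow>
        (\<exists>s. hom ar C f C f s \<and> (\<forall>i. 1 \<le> i \<and> i \<le> n \<longrightarrow> s (e i) = bs ! (i - 1))
                               \<and> (\<forall>i>n. s (e i) = e i)) \<and>
        (\<forall>s. hom ar C f C f s \<and> (\<forall>i. 1 \<le> i \<and> i \<le> n \<longrightarrow> s (e i) = bs ! (i - 1))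
                               \<and> (\<forall>i>n. s (e i) = e i) \<longrightarrow> q n a bs = s a))
     \<and>
     \<comment> \<open>(iii) C is free over the empty set in Var(C)\<close>
     (in_Var (clone_ar ar) C (clone_int f q e) C (clone_int f q e) \<and>
      (\<forall>(B :: 'c set) J. in_Var (clone_ar ar) C (clone_int f q e) B J \<longrightarrow>
         (\<exists>h. hom (clone_ar ar) C (clone_int f q e) B J h) \<and>
         (\<forall>h h'. hom (clone_ar ar) C (clone_int f q e) B J h \<and>
                 hom (clone_ar ar) C (clone_int f q e) B J h' \<longrightarrow> (\<forall>x\<in>C. h x = h' x))))"
proof -
  note C = minimal_clone_algebraD(1)[OF assms]
  have subst_hom: "\<exists>s. hom ar C f C f s \<and> (\<forall>i. 1 \<le> i \<and> i \<le> n \<longrightarrow> s (e i) = bs ! (i - 1))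
      \<and> (\<forall>i>n. s (e i) = e i)"
    if "length bs = n" "set bs \<subseteq> C" for n bs
    using hom_q[OF C that] clone_algebra_q_e_le[OF C that] clone_algebra_q_e_gt[OF C that] by auto
  show ?thesis
    apply (intro conjI allI impI ballI; (elim conjE)?)
    subgoal by (rule in_Var_refl[OF clone_algebra_algebra[OF C]])
    subgoal by (rule minimal_clone_algebra_extend_hom[OF assms])
    subgoal by (rule minimal_clone_algebra_hom_eq[OF assms]) auto
    subgoal by (rule subst_hom)
    subgoal by (rule minimal_clone_algebra_q_eq_hom[OF assms])
    subgoal by (rule in_Var_refl[OF algebra_clone_int[OF C]])
    subgoal by (rule minimal_clone_algebra_clone_hom_exists[OF assms])
    subgoal by (rule minimal_clone_algebra_clone_hom_eq[OF assms])
    done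
qed

end
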